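(* Let $T\in\mathcal C(\rho)$ and define $K_T\colon G\times Y\times G\times Y\to\mathbb C$ by $K_T(x,y,u,v)=(TK_{u,v})(x,y)$. Then for every $f\in H$ and $(x,y)\in G\times Y$, \[ (Tf)(x,y)=\int_{G\times Y}K_T(x,y,u,v)\,f(u,v)\,d\nu(u)\,d\lambda(v). \] Moreover, $K_T(x,y,u,v)=K_T(x-u,y,0,v)$ for all $u,x\in G$, $v,y\in Y$, and $K_T(\cdot,\cdot,0,v)\in H$ for every $v\in Y$ and $\overline{K_T(0,y,\cdot,\cdot)}\in H$ for every $y\in Y$.
   Context: Let $G$ be a locally compact abelian group (written additively) with Haar measure $\nu$, and $(Y,\lambda)$ a measure space. Let $H$ be a reproducing kernel Hilbert space of complex functions on $G\times Y$ whose inner product is that of $L^2(G\times Y,\nu\otimes\lambda)$, with reproducing kernel $(K_{x,y})_{(x,y)\in G\times Y}$ (so $f(x,y)=\langle f,K_{x,y}\rangle$ for $f\in H$). Assume $K_{x,y}(u,v)=K_{0,y}(u-x,v)$ for all $u,x\in G$, $v,y\in Y$. For $a\in G$ let $\rho(a)$ be the unitary operator on $H$ given by $(\rho(a)f)(x,y)=f(x-a,y)$, and $\mathcal C(\rho)=\{S\in\mathcal B(H): S\rho(a)=\rho(a)S\ \forall a\in G\}$. *)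

theory Defs
  imports "HOL-Analysis.Analysis"
begin

definition haar_measure :: "'g::{topological_ab_group_add, t2_space} measure \<Rightarrow> bool" where
  "haar_measure \<nu> \<longleftrightarrow>
     sets \<nu> = sets borel \<and>
     (\<forall>a A. A \<in> sets borel \<longrightarrow> emeasure \<nu> ((\<lambda>x. a + x) ` A) = emeasure \<nu> A) \<and>
     (\<forall>C. compact C \<longrightarrow> emeasure \<nu> C < \<infinity>) \<and>
     (\<forall>U. open U \<and> U \<noteq> {} \<longrightarrow> emeasure \<nu> U > 0) \<and>
     (\<forall>A \<in> sets borel. emeasure \<nu> A = (INF U\<in>{U. open U \<and> A \<subseteq> U}. emeasure \<nu> U)) \<and>
     (\<forall>U. open U \<longrightarrow> emeasure \<nu> U = (SUP C\<in>{C. compact C \<and> C \<subseteq> U}. emeasure \<nu> C))"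

definition L2_inner :: "'a measure \<Rightarrow> ('a \<Rightarrow> complex) \<Rightarrow> ('a \<Rightarrow> complex) \<Rightarrow> complex" where
  "L2_inner M f g = (\<integral>z. f z * cnj (g z) \<partial>M)"

definition L2_norm :: "'a measure \<Rightarrow> ('a \<Rightarrow> complex) \<Rightarrow> real" where
  "L2_norm M f = sqrt (\<integral>z. (cmod (f z))\<^sup>2 \<partial>M)"

definition square_integrable :: "'a measure \<Rightarrow> ('a \<Rightarrow> complex) \<Rightarrow> bool" where
  "square_integrable M f \<longleftrightarrow> f \<in> borel_measurable M \<and> integrable M (\<lambda>z. (cmod (f z))\<^sup>2)"

text \<open>H is a Hilbert space of (genuine) functions with the L^2(M) inner product:
  a complex linear subspace of square-integrable functions, complete in the L^2 norm.\<close>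
definition L2_hilbert_subspace :: "'a measure \<Rightarrow> ('a \<Rightarrow> complex) set \<Rightarrow> bool" where
  "L2_hilbert_subspace M H \<longleftrightarrow>
     (\<forall>f\<in>H. square_integrable M f) \<and>
     (\<lambda>z. 0) \<in> H \<and>
     (\<forall>f\<in>H. \<forall>g\<in>H. (\<lambda>z. f z + g z) \<in> H) \<and>
     (\<forall>c f. f \<in> H \<longrightarrow> (\<lambda>z. c * f z) \<in> H) \<and>
     (\<forall>s. (\<forall>n. s n \<in> H) \<and>
          (\<forall>e>0. \<exists>N. \<forall>m\<ge>N. \<forall>n\<ge>N. L2_norm M (\<lambda>z. s m z - s n z) < e) \<longrightarrow>
          (\<exists>f\<in>H. (\<lambda>n. L2_norm M (\<lambda>z. s n z - f z)) \<longlonglongrightarrow> 0))"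

definition L2_rkhs :: "'a measure \<Rightarrow> ('a \<Rightarrow> complex) set \<Rightarrow> ('a \<Rightarrow> 'a \<Rightarrow> complex) \<Rightarrow> bool" where
  "L2_rkhs M H K \<longleftrightarrow> L2_hilbert_subspace M H \<and>
     (\<forall>p. K p \<in> H) \<and> (\<forall>f\<in>H. \<forall>p. f p = L2_inner M f (K p))"

text \<open>S is a bounded linear operator on H (only its values on H matter).\<close>
definition bounded_op_on :: "'a measure \<Rightarrow> ('a \<Rightarrow> complex) set \<Rightarrow> (('a \<Rightarrow> complex) \<Rightarrow> ('a \<Rightarrow> complex)) \<Rightarrow> bool" where
  "bounded_op_on M H S \<longleftrightarrow>
     (\<forall>f\<in>H. S f \<in> H) \<and>
     (\<forall>f\<in>H. \<forall>g\<in>H. S (\<lambda>z. f z + g z) = (\<lambda>z. S f z + S g z)) \<and>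
     (\<forall>c. \<forall>f\<in>H. S (\<lambda>z. c * f z) = (\<lambda>z. c * S f z)) \<and>
     (\<exists>C. \<forall>f\<in>H. L2_norm M (S f) \<le> C * L2_norm M f)"

definition transl :: "'g::ab_group_add \<Rightarrow> ('g \<times> 'y \<Rightarrow> complex) \<Rightarrow> ('g \<times> 'y \<Rightarrow> complex)" where
  "transl a f = (\<lambda>(x, y). f (x - a, y))"

end

theory Submission
  imports Defs
begin

(* For fixed (x, y) the functional f |-> (T f)(x, y) = <T f, K_(x,y)> is bounded on H by
   Cauchy-Schwarz, so by the Riesz representation theorem it equals <f, h> for some h in H.
   The reproducing property identifies h(u, v) = cnj <K_(u,v), h> = cnj ((T K_(u,v))(x, y)),
   which gives the integral formula and cnj K_T(x, y, _, _) in H at once.  Riesz is proved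
   directly for the concrete space H by the minimal-norm argument: by the parallelogram law a
   minimising sequence in the level set {phi = 1} is Cauchy, its limit f0 is orthogonal to the
   kernel of phi, and f0 / |f0|^2 represents phi.  The translation identity is
   K_(u,v) = rho(u) K_(0,v) combined with T rho(u) = rho(u) T. *)

lemma nonneg_quadratic_imp_sq_le:
  fixes a b r :: real
  assumes nonneg: "\<And>t. 0 \<le> a + 2 * t * r + t\<^sup>2 * b" and "0 \<le> b"
  shows "r\<^sup>2 \<le> a * b"
proof (cases "b = 0")
  case True
  have "r = 0"
  proof (rule ccontr)
    assume "r \<noteq> 0"
    then have "a + 2 * (- (a + 1) / (2 * r)) * r + (- (a + 1) / (2 * r))\<^sup>2 * b < 0"
      using True by (simp add: field_simps)
    with nonneg show False by (meson not_le)
  qed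
  with True show ?thesis by simp
next
  case False
  have "0 \<le> a + 2 * (- r / b) * r + (- r / b)\<^sup>2 * b" by (rule nonneg)
  also have "\<dots> = a - r\<^sup>2 / b" using False by (simp add: power2_eq_square field_simps)
  finally show ?thesis using False \<open>0 \<le> b\<close> by (simp add: field_simps)
qed

lemma square_integrable_inner_integrable:
  assumes f: "square_integrable M f" and g: "square_integrable M g"
  shows "integrable M (\<lambda>z. f z * cnj (g z))"
proof (rule Bochner_Integration.integrable_bound)
  show "integrable M (\<lambda>z. (cmod (f z))\<^sup>2 + (cmod (g z))\<^sup>2)"
    using f g unfolding square_integrable_def by auto
  have [measurable]: "f \<in> borel_measurable M" "g \<in> borel_measurable M"
    using f g unfolding square_integrable_def by auto
  have "(\<lambda>z. cnj (g z)) \<in> borel_measurable M"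
    by (rule borel_measurable_continuous_on[where f = cnj]) simp_all
  then show "(\<lambda>z. f z * cnj (g z)) \<in> borel_measurable M" by measurable
  have "cmod (f z) * cmod (g z) \<le> (cmod (f z))\<^sup>2 + (cmod (g z))\<^sup>2" for z
    using sum_squares_bound[of "cmod (f z)" "cmod (g z)"]
      mult_nonneg_nonneg[OF norm_ge_zero norm_ge_zero, of "f z" "g z"] by linarith
  then show "AE z in M. norm (f z * cnj (g z)) \<le> norm ((cmod (f z))\<^sup>2 + (cmod (g z))\<^sup>2)"
    by (simp add: norm_mult)
qed

lemma L2_norm_nonneg: "0 \<le> L2_norm M f"
  unfolding L2_norm_def by simp

lemma L2_norm_sq: "(L2_norm M f)\<^sup>2 = (\<integral>z. (cmod (f z))\<^sup>2 \<partial>M)"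
  unfolding L2_norm_def by (simp add: integral_nonneg_AE)

lemma L2_inner_self: "L2_inner M f f = of_real ((L2_norm M f)\<^sup>2)"
  unfolding L2_inner_def L2_norm_sq
  by (simp add: complex_norm_square[symmetric] del: of_real_power)

lemma L2_inner_cnj_commute: "L2_inner M g f = cnj (L2_inner M f g)"
  unfolding L2_inner_def
  by (simp flip: Bochner_Integration.integral_cnj add: mult.commute)

lemma L2_inner_mult_right: "L2_inner M f (\<lambda>z. c * g z) = cnj c * L2_inner M f g"
  unfolding L2_inner_def by (simp add: ac_simps)

lemma L2_inner_add_left:
  assumes "square_integrable M f" "square_integrable M g" "square_integrable M h"
  shows "L2_inner M (\<lambda>z. f z + g z) h = L2_inner M f h + L2_inner M g h"
  unfolding L2_inner_def
  using square_integrable_inner_integrable[OF assms(1,3)] square_integrable_inner_integrable[OF assms(2,3)]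
  by (simp add: distrib_right)

lemma L2_inner_add_right:
  assumes "square_integrable M f" "square_integrable M g" "square_integrable M h"
  shows "L2_inner M h (\<lambda>z. f z + g z) = L2_inner M h f + L2_inner M h g"
  using L2_inner_add_left[OF assms] L2_inner_cnj_commute[of M h] by (metis complex_cnj_add)

lemma L2_norm_mult: "L2_norm M (\<lambda>z. c * f z) = cmod c * L2_norm M f"
  unfolding L2_norm_def by (simp add: norm_mult power_mult_distrib real_sqrt_mult)

lemma L2_norm_minus_commute: "L2_norm M (\<lambda>z. f z - g z) = L2_norm M (\<lambda>z. g z - f z)"
  unfolding L2_norm_def by (simp add: norm_minus_commute)

lemma Cauchy_if_sq_le_sum_null:
  fixes d :: "nat \<Rightarrow> nat \<Rightarrow> real"
  assumes le: "\<And>m n. (d m n)\<^sup>2 \<le> e m + e n" and e: "e \<longlonglongrightarrow> 0"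
  shows "\<forall>\<epsilon>>0. \<exists>N. \<forall>m\<ge>N. \<forall>n\<ge>N. d m n < \<epsilon>"
proof (intro allI impI)
  fix \<epsilon> :: real
  assume "\<epsilon> > 0"
  then have "\<forall>\<^sub>F n in sequentially. e n < \<epsilon>\<^sup>2 / 2"
    using e by (intro order_tendstoD) auto
  then obtain N where N: "\<And>n. n \<ge> N \<Longrightarrow> e n < \<epsilon>\<^sup>2 / 2"
    unfolding eventually_sequentially by blast
  have "d m n < \<epsilon>" if "m \<ge> N" "n \<ge> N" for m n
  proof (rule power2_less_imp_less)
    show "(d m n)\<^sup>2 < \<epsilon>\<^sup>2" using le[of m n] N[OF that(1)] N[OF that(2)] by linarith
  qed (use \<open>\<epsilon> > 0\<close> in simp)
  then show "\<exists>N. \<forall>m\<ge>N. \<forall>n\<ge>N. d m n < \<epsilon>" by blast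
qed

locale L2_function_space =
  fixes M :: "'a measure" and H :: "('a \<Rightarrow> complex) set"
  assumes hilbert: "L2_hilbert_subspace M H"
begin

lemma square_integrable: "f \<in> H \<Longrightarrow> square_integrable M f"
  using hilbert unfolding L2_hilbert_subspace_def by auto

lemma zero_mem: "(\<lambda>z. 0) \<in> H"
  using hilbert unfolding L2_hilbert_subspace_def by auto

lemma add_mem: "f \<in> H \<Longrightarrow> g \<in> H \<Longrightarrow> (\<lambda>z. f z + g z) \<in> H"
  using hilbert unfolding L2_hilbert_subspace_def by auto

lemma mult_mem: "f \<in> H \<Longrightarrow> (\<lambda>z. c * f z) \<in> H"
  using hilbert unfolding L2_hilbert_subspace_def by auto

lemma diff_mem: "f \<in> H \<Longrightarrow> g \<in> H \<Longrightarrow> (\<lambda>z. f z - g z) \<in> H"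
  using add_mem[of f "\<lambda>z. (-1) * g z"] mult_mem[of g "-1"] by simp

lemma complete:
  assumes "\<And>n. s n \<in> H"
    and "\<forall>e>0. \<exists>N. \<forall>m\<ge>N. \<forall>n\<ge>N. L2_norm M (\<lambda>z. s m z - s n z) < e"
  obtains f where "f \<in> H" "(\<lambda>n. L2_norm M (\<lambda>z. s n z - f z)) \<longlonglongrightarrow> 0"
  using hilbert assms unfolding L2_hilbert_subspace_def by blast

lemma inner_add_left:
  "f \<in> H \<Longrightarrow> g \<in> H \<Longrightarrow> h \<in> H \<Longrightarrow>
    L2_inner M (\<lambda>z. f z + g z) h = L2_inner M f h + L2_inner M g h"
  by (intro L2_inner_add_left square_integrable)

lemma inner_add_right:
  "f \<in> H \<Longrightarrow> g \<in> H \<Longrightarrow> h \<in> H \<Longrightarrow>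
    L2_inner M h (\<lambda>z. f z + g z) = L2_inner M h f + L2_inner M h g"
  by (intro L2_inner_add_right square_integrable)

lemma inner_diff_right:
  assumes "f \<in> H" "g \<in> H" "h \<in> H"
  shows "L2_inner M h (\<lambda>z. f z - g z) = L2_inner M h f - L2_inner M h g"
  using inner_add_right[OF assms(1) mult_mem[OF assms(2)] assms(3), of "-1"]
    L2_inner_mult_right[of M h "-1" g] by simp

lemma norm_add_sq:
  assumes "f \<in> H" "g \<in> H"
  shows "(L2_norm M (\<lambda>z. f z + g z))\<^sup>2 =
    (L2_norm M f)\<^sup>2 + (L2_norm M g)\<^sup>2 + 2 * Re (L2_inner M f g)"
proof -
  have "L2_inner M (\<lambda>z. f z + g z) (\<lambda>z. f z + g z) =
      L2_inner M f f + L2_inner M g g + (L2_inner M f g + cnj (L2_inner M f g))"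
    using assms add_mem[OF assms]
    by (simp add: inner_add_left inner_add_right L2_inner_cnj_commute[of M g f])
  then show ?thesis
    by (simp add: L2_inner_self complex_eq_iff del: of_real_power)
qed

lemma norm_diff_sq:
  assumes "f \<in> H" "g \<in> H"
  shows "(L2_norm M (\<lambda>z. f z - g z))\<^sup>2 =
    (L2_norm M f)\<^sup>2 + (L2_norm M g)\<^sup>2 - 2 * Re (L2_inner M f g)"
  using norm_add_sq[OF assms(1) mult_mem[OF assms(2)], of "-1"]
    L2_norm_mult[of M "-1" g] L2_inner_mult_right[of M f "-1" g] by simp

lemma parallelogram:
  "f \<in> H \<Longrightarrow> g \<in> H \<Longrightarrow>
    (L2_norm M (\<lambda>z. f z + g z))\<^sup>2 + (L2_norm M (\<lambda>z. f z - g z))\<^sup>2 =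
    2 * (L2_norm M f)\<^sup>2 + 2 * (L2_norm M g)\<^sup>2"
  by (simp add: norm_add_sq norm_diff_sq)

(* On the real line t |-> f + t <f, g> g the squared norm is a quadratic in t; its discriminant
   yields both Cauchy-Schwarz and the orthogonality of a norm minimiser. *)
lemma norm_add_rotated_sq:
  assumes "f \<in> H" "g \<in> H"
  defines "w \<equiv> L2_inner M f g"
  shows "(L2_norm M (\<lambda>z. f z + (of_real t * w) * g z))\<^sup>2 =
    (L2_norm M f)\<^sup>2 + 2 * t * (cmod w)\<^sup>2 + t\<^sup>2 * ((cmod w)\<^sup>2 * (L2_norm M g)\<^sup>2)"
proof -
  have "cnj w * w = of_real ((cmod w)\<^sup>2)"
    by (subst complex_norm_square) (rule mult.commute)
  then have "Re (L2_inner M f (\<lambda>z. (of_real t * w) * g z)) = t * (cmod w)\<^sup>2"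
    by (simp add: L2_inner_mult_right mult.assoc flip: w_def)
  then show ?thesis
    using norm_add_sq[OF assms(1) mult_mem[OF assms(2)]]
    by (simp add: L2_norm_mult norm_mult power_mult_distrib)
qed

lemma cauchy_schwarz:
  assumes "f \<in> H" "g \<in> H"
  shows "cmod (L2_inner M f g) \<le> L2_norm M f * L2_norm M g"
proof -
  define w where "w = L2_inner M f g"
  have "((cmod w)\<^sup>2)\<^sup>2 \<le> (L2_norm M f)\<^sup>2 * ((cmod w)\<^sup>2 * (L2_norm M g)\<^sup>2)"
  proof (rule nonneg_quadratic_imp_sq_le)
    show "0 \<le> (L2_norm M f)\<^sup>2 + 2 * t * (cmod w)\<^sup>2 + t\<^sup>2 * ((cmod w)\<^sup>2 * (L2_norm M g)\<^sup>2)" for t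
      using norm_add_rotated_sq[OF assms, of t] zero_le_power2 unfolding w_def by metis
  qed simp
  then have le: "(cmod w)\<^sup>2 * (cmod w)\<^sup>2 \<le> (cmod w)\<^sup>2 * (L2_norm M f * L2_norm M g)\<^sup>2"
    by (simp add: power2_eq_square mult_ac)
  have "(cmod w)\<^sup>2 \<le> (L2_norm M f * L2_norm M g)\<^sup>2"
    by (cases "w = 0") (simp, rule mult_left_le_imp_le[OF le], simp)
  then show ?thesis
    unfolding w_def by (rule power2_le_imp_le) (simp add: L2_norm_nonneg)
qed

lemma norm_triangle:
  assumes "f \<in> H" "g \<in> H"
  shows "L2_norm M (\<lambda>z. f z + g z) \<le> L2_norm M f + L2_norm M g"
proof (rule power2_le_imp_le)
  have "Re (L2_inner M f g) \<le> L2_norm M f * L2_norm M g"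
    using complex_Re_le_cmod cauchy_schwarz[OF assms] by (rule order_trans)
  then show "(L2_norm M (\<lambda>z. f z + g z))\<^sup>2 \<le> (L2_norm M f + L2_norm M g)\<^sup>2"
    by (simp add: norm_add_sq[OF assms] power2_sum)
qed (simp add: L2_norm_nonneg)

lemma orthogonal_if_norm_minimal:
  assumes "f0 \<in> H" "g \<in> H"
    and min: "\<And>c. L2_norm M f0 \<le> L2_norm M (\<lambda>z. f0 z + c * g z)"
  shows "L2_inner M f0 g = 0"
proof -
  define w where "w = L2_inner M f0 g"
  have "((cmod w)\<^sup>2)\<^sup>2 \<le> 0 * ((cmod w)\<^sup>2 * (L2_norm M g)\<^sup>2)"
  proof (rule nonneg_quadratic_imp_sq_le)
    fix t :: real
    have "(L2_norm M f0)\<^sup>2 \<le> (L2_norm M (\<lambda>z. f0 z + (of_real t * w) * g z))\<^sup>2"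
      using min L2_norm_nonneg by (rule power_mono)
    then show "0 \<le> 0 + 2 * t * (cmod w)\<^sup>2 + t\<^sup>2 * ((cmod w)\<^sup>2 * (L2_norm M g)\<^sup>2)"
      unfolding w_def norm_add_rotated_sq[OF assms(1,2)] by simp
  qed simp
  then show ?thesis unfolding w_def by simp
qed

lemma minimizing_sequence_converges:
  assumes s: "\<And>n. s n \<in> H"
    and mid: "\<And>m n. d \<le> (L2_norm M (\<lambda>z. (1 / 2) * (s m z + s n z)))\<^sup>2"
    and s_sq: "\<And>n. (L2_norm M (s n))\<^sup>2 < d + inverse (real (Suc n))"
  obtains f0 where "f0 \<in> H" "(\<lambda>n. L2_norm M (\<lambda>z. s n z - f0 z)) \<longlonglongrightarrow> 0" "L2_norm M f0 \<le> sqrt d"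
proof -
  have "(L2_norm M (\<lambda>z. s m z - s n z))\<^sup>2 \<le> 2 * inverse (real (Suc m)) + 2 * inverse (real (Suc n))"
    for m n
  proof -
    have "d \<le> (L2_norm M (\<lambda>z. s m z + s n z))\<^sup>2 / 4"
      using mid[of m n] by (simp only: L2_norm_mult) (simp add: power_divide)
    then show ?thesis
      using parallelogram[OF s s, of m n] s_sq[of m] s_sq[of n] by linarith
  qed
  moreover have "(\<lambda>n. 2 * inverse (real (Suc n))) \<longlonglongrightarrow> 0"
    using tendsto_mult_right_zero[OF LIMSEQ_inverse_real_of_nat] by simp
  ultimately have "\<forall>\<epsilon>>0. \<exists>N. \<forall>m\<ge>N. \<forall>n\<ge>N. L2_norm M (\<lambda>z. s m z - s n z) < \<epsilon>"
    by (rule Cauchy_if_sq_le_sum_null)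
  then obtain f0 where f0: "f0 \<in> H" and lim: "(\<lambda>n. L2_norm M (\<lambda>z. s n z - f0 z)) \<longlonglongrightarrow> 0"
    using complete[of s, OF s] by blast
  have "L2_norm M f0 \<le> sqrt (d + inverse (real (Suc n))) + L2_norm M (\<lambda>z. s n z - f0 z)" for n
  proof -
    have "L2_norm M f0 \<le> L2_norm M (s n) + L2_norm M (\<lambda>z. f0 z - s n z)"
      using norm_triangle[OF s diff_mem[OF f0 s], of n n] by simp
    moreover have "L2_norm M (s n) \<le> sqrt (d + inverse (real (Suc n)))"
      using s_sq[of n] L2_norm_nonneg by (simp add: real_le_rsqrt)
    ultimately show ?thesis by (simp add: L2_norm_minus_commute[of M f0])
  qed
  moreover have "(\<lambda>n. sqrt (d + inverse (real (Suc n))) + L2_norm M (\<lambda>z. s n z - f0 z))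
      \<longlonglongrightarrow> sqrt (d + 0) + 0"
    by (intro tendsto_add tendsto_real_sqrt tendsto_const LIMSEQ_inverse_real_of_nat lim)
  ultimately have "L2_norm M f0 \<le> sqrt (d + 0) + 0"
    by (intro LIMSEQ_le_const) auto
  then show ?thesis using that f0 lim by simp
qed

end

definition bounded_functional_on ::
    "'a measure \<Rightarrow> ('a \<Rightarrow> complex) set \<Rightarrow> (('a \<Rightarrow> complex) \<Rightarrow> complex) \<Rightarrow> bool" where
  "bounded_functional_on M H \<phi> \<longleftrightarrow>
     (\<forall>f\<in>H. \<forall>g\<in>H. \<phi> (\<lambda>z. f z + g z) = \<phi> f + \<phi> g) \<and>
     (\<forall>c. \<forall>f\<in>H. \<phi> (\<lambda>z. c * f z) = c * \<phi> f) \<and>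
     (\<exists>C. \<forall>f\<in>H. cmod (\<phi> f) \<le> C * L2_norm M f)"

locale L2_bounded_functional = L2_function_space +
  fixes \<phi> :: "('a \<Rightarrow> complex) \<Rightarrow> complex"
  assumes bounded_functional: "bounded_functional_on M H \<phi>"
begin

lemma functional_add: "f \<in> H \<Longrightarrow> g \<in> H \<Longrightarrow> \<phi> (\<lambda>z. f z + g z) = \<phi> f + \<phi> g"
  using bounded_functional unfolding bounded_functional_on_def by blast

lemma functional_mult: "f \<in> H \<Longrightarrow> \<phi> (\<lambda>z. c * f z) = c * \<phi> f"
  using bounded_functional unfolding bounded_functional_on_def by blast

lemma functional_diff: "f \<in> H \<Longrightarrow> g \<in> H \<Longrightarrow> \<phi> (\<lambda>z. f z - g z) = \<phi> f - \<phi> g"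
  using functional_add[OF _ mult_mem, of f g "-1"] functional_mult[of g "-1"] by simp

lemma functional_bounded: "\<exists>C. \<forall>f\<in>H. cmod (\<phi> f) \<le> C * L2_norm M f"
  using bounded_functional unfolding bounded_functional_on_def by blast

lemma exists_min_norm_level_set:
  assumes "f1 \<in> H" "\<phi> f1 = 1"
  obtains f0 where "f0 \<in> H" "\<phi> f0 = 1"
    "\<And>g. g \<in> H \<Longrightarrow> \<phi> g = 1 \<Longrightarrow> L2_norm M f0 \<le> L2_norm M g"
proof -
  define A where "A = {g \<in> H. \<phi> g = 1}"
  define d where "d = Inf ((\<lambda>g. (L2_norm M g)\<^sup>2) ` A)"
  have bdd: "bdd_below ((\<lambda>g. (L2_norm M g)\<^sup>2) ` A)"
    by (rule bdd_belowI[of _ 0]) auto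
  have d_le: "d \<le> (L2_norm M g)\<^sup>2" if "g \<in> A" for g
    unfolding d_def using bdd that by (auto intro: cInf_lower)
  have "\<exists>g\<in>A. (L2_norm M g)\<^sup>2 < d + inverse (real (Suc n))" for n
    using cInf_less_iff[OF _ bdd, of "d + inverse (real (Suc n))"] assms
    unfolding A_def d_def by auto
  then obtain s where sA: "\<And>n. s n \<in> A"
    and s_sq: "\<And>n. (L2_norm M (s n))\<^sup>2 < d + inverse (real (Suc n))"
    by metis
  have s: "s n \<in> H" "\<phi> (s n) = 1" for n
    using sA unfolding A_def by auto
  have "d \<le> (L2_norm M (\<lambda>z. (1 / 2) * (s m z + s n z)))\<^sup>2" for m n
  proof (rule d_le)
    have "\<phi> (\<lambda>z. (1 / 2) * (s m z + s n z)) = 1"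
      using functional_mult[OF add_mem[OF s(1) s(1)], of "1 / 2" m n]
        functional_add[OF s(1) s(1), of m n] s(2)
      by (simp only:) simp
    moreover have "(\<lambda>z. (1 / 2) * (s m z + s n z)) \<in> H" by (intro mult_mem add_mem s)
    ultimately show "(\<lambda>z. (1 / 2) * (s m z + s n z)) \<in> A" unfolding A_def by blast
  qed
  then obtain f0 where f0: "f0 \<in> H" and lim: "(\<lambda>n. L2_norm M (\<lambda>z. s n z - f0 z)) \<longlonglongrightarrow> 0"
    and f0_le: "L2_norm M f0 \<le> sqrt d"
    using minimizing_sequence_converges[of s d, OF s(1) _ s_sq] by blast
  obtain C where C: "\<And>f. f \<in> H \<Longrightarrow> cmod (\<phi> f) \<le> C * L2_norm M f"
    using functional_bounded by blast
  have "cmod (\<phi> f0 - 1) \<le> C * L2_norm M (\<lambda>z. s n z - f0 z)" for n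
    using C[OF diff_mem[OF f0 s(1)]] functional_diff[OF f0 s(1)] s(2)
    by (simp add: L2_norm_minus_commute[of M f0])
  then have "cmod (\<phi> f0 - 1) \<le> C * 0"
    by (intro LIMSEQ_le_const[OF tendsto_mult[OF tendsto_const lim]]) auto
  then have "\<phi> f0 = 1" by simp
  have "L2_norm M f0 \<le> L2_norm M g" if "g \<in> A" for g
    using f0_le real_sqrt_le_mono[OF d_le[OF that]] by (simp add: L2_norm_nonneg)
  then show ?thesis using that f0 \<open>\<phi> f0 = 1\<close> unfolding A_def by blast
qed

theorem riesz_representation: "\<exists>h\<in>H. \<forall>f\<in>H. \<phi> f = L2_inner M f h"
proof (cases "\<forall>f\<in>H. \<phi> f = 0")
  case True
  then show ?thesis
    using zero_mem by (intro bexI[of _ "\<lambda>z. 0"]) (auto simp: L2_inner_def)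
next
  case False
  then obtain f1 where f1: "f1 \<in> H" "\<phi> f1 \<noteq> 0" by blast
  have "(\<lambda>z. (1 / \<phi> f1) * f1 z) \<in> H" using f1(1) by (rule mult_mem)
  moreover have "\<phi> (\<lambda>z. (1 / \<phi> f1) * f1 z) = 1"
    using functional_mult[OF f1(1), of "1 / \<phi> f1"] f1(2) by simp
  ultimately obtain f0 where f0: "f0 \<in> H" "\<phi> f0 = 1"
    and min: "\<And>g. g \<in> H \<Longrightarrow> \<phi> g = 1 \<Longrightarrow> L2_norm M f0 \<le> L2_norm M g"
    using exists_min_norm_level_set by blast
  have orth: "L2_inner M f0 g = 0" if g: "g \<in> H" "\<phi> g = 0" for g
  proof (rule orthogonal_if_norm_minimal[OF f0(1) g(1)])
    fix c
    have "\<phi> (\<lambda>z. f0 z + c * g z) = 1"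
      using functional_add[OF f0(1) mult_mem[OF g(1)]] functional_mult[OF g(1)] f0(2) g(2) by simp
    then show "L2_norm M f0 \<le> L2_norm M (\<lambda>z. f0 z + c * g z)"
      by (intro min add_mem mult_mem f0(1) g(1))
  qed
  have "L2_norm M f0 \<noteq> 0"
  proof
    assume "L2_norm M f0 = 0"
    moreover obtain C where "\<And>f. f \<in> H \<Longrightarrow> cmod (\<phi> f) \<le> C * L2_norm M f"
      using functional_bounded by blast
    ultimately show False using f0 by force
  qed
  define h where "h = (\<lambda>z. of_real (1 / (L2_norm M f0)\<^sup>2) * f0 z)"
  have "\<phi> f = L2_inner M f h" if f: "f \<in> H" for f
  proof -
    have "L2_inner M f0 (\<lambda>z. f z - \<phi> f * f0 z) = 0"
      using f f0 by (intro orth) (simp_all add: diff_mem mult_mem functional_diff functional_mult)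
    then have "L2_inner M f0 f = cnj (\<phi> f) * of_real ((L2_norm M f0)\<^sup>2)"
      using inner_diff_right[OF f mult_mem[OF f0(1)] f0(1), of "\<phi> f"]
      by (simp add: L2_inner_mult_right L2_inner_self)
    then have "L2_inner M f h = of_real (1 / (L2_norm M f0)\<^sup>2) * (\<phi> f * of_real ((L2_norm M f0)\<^sup>2))"
      unfolding h_def L2_inner_mult_right L2_inner_cnj_commute[of M f f0] by simp
    then show ?thesis using \<open>L2_norm M f0 \<noteq> 0\<close> by simp
  qed
  moreover have "h \<in> H" unfolding h_def using f0(1) by (rule mult_mem)
  ultimately show ?thesis by blast
qed

end

lemma bounded_functional_on_eval_op:
  assumes rkhs: "L2_rkhs M H K" and T: "bounded_op_on M H T"
  shows "bounded_functional_on M H (\<lambda>f. T f p)"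
proof -
  interpret L2_function_space M H
    using rkhs unfolding L2_rkhs_def by unfold_locales blast
  obtain C where C: "\<And>f. f \<in> H \<Longrightarrow> L2_norm M (T f) \<le> C * L2_norm M f"
    using T unfolding bounded_op_on_def by blast
  have "cmod (T f p) \<le> (C * L2_norm M (K p)) * L2_norm M f" if f: "f \<in> H" for f
  proof -
    have Tf: "T f \<in> H" using T f unfolding bounded_op_on_def by blast
    have "cmod (T f p) = cmod (L2_inner M (T f) (K p))"
      using rkhs Tf unfolding L2_rkhs_def by simp
    also have "\<dots> \<le> L2_norm M (T f) * L2_norm M (K p)"
      using rkhs Tf unfolding L2_rkhs_def by (intro cauchy_schwarz) auto
    also have "\<dots> \<le> C * L2_norm M f * L2_norm M (K p)"
      using C[OF f] L2_norm_nonneg by (rule mult_right_mono)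
    finally show ?thesis by (simp add: ac_simps)
  qed
  then show ?thesis
    using T unfolding bounded_functional_on_def bounded_op_on_def by auto
qed

lemma L2_rkhs_eval_op_representer:
  assumes rkhs: "L2_rkhs M H K" and T: "bounded_op_on M H T"
  shows "(\<lambda>q. cnj (T (K q) p)) \<in> H"
    and "\<And>f. f \<in> H \<Longrightarrow> T f p = L2_inner M f (\<lambda>q. cnj (T (K q) p))"
proof -
  interpret L2_bounded_functional M H "\<lambda>f. T f p"
    using rkhs bounded_functional_on_eval_op[OF rkhs T]
    unfolding L2_rkhs_def by unfold_locales blast+
  obtain h where h: "h \<in> H" and rep: "\<And>f. f \<in> H \<Longrightarrow> T f p = L2_inner M f h"
    using riesz_representation by blast
  have "h q = cnj (T (K q) p)" for q
  proof -
    have "K q \<in> H" and "h q = L2_inner M h (K q)"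
      using rkhs h unfolding L2_rkhs_def by auto
    then show ?thesis by (simp add: rep L2_inner_cnj_commute[of M h])
  qed
  then have "h = (\<lambda>q. cnj (T (K q) p))" by blast
  then show "(\<lambda>q. cnj (T (K q) p)) \<in> H"
    and "\<And>f. f \<in> H \<Longrightarrow> T f p = L2_inner M f (\<lambda>q. cnj (T (K q) p))"
    using h rep by auto
qed

lemma transl_kernel:
  assumes "\<And>x y u v. K (x, y) (u, v) = K (0, y) (u - x, v)"
  shows "K (a, v) = transl a (K (0, v))"
  using assms unfolding transl_def by auto

theorem proposition4p1:
  fixes \<nu> :: "'g::{topological_ab_group_add, t2_space} measure"
    and lam :: "'y measure"
    and H :: "('g \<times> 'y \<Rightarrow> complex) set"
    and K :: "'g \<times> 'y \<Rightarrow> 'g \<times> 'y \<Rightarrow> complex"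
    and T :: "('g \<times> 'y \<Rightarrow> complex) \<Rightarrow> ('g \<times> 'y \<Rightarrow> complex)"
    and KT :: "'g \<Rightarrow> 'y \<Rightarrow> 'g \<Rightarrow> 'y \<Rightarrow> complex"
  assumes LC: "locally_compact_space (euclidean :: 'g topology)"
    and haar: "haar_measure \<nu>"
    and rkhs: "L2_rkhs (\<nu> \<Otimes>\<^sub>M lam) H K"
    and Kinv: "\<And>x y u v. K (x, y) (u, v) = K (0, y) (u - x, v)"
    and Tbdd: "bounded_op_on (\<nu> \<Otimes>\<^sub>M lam) H T"
    and Tcomm: "\<And>a f. f \<in> H \<Longrightarrow> T (transl a f) = transl a (T f)"
    and KT_def: "\<And>x y u v. KT x y u v = T (K (u, v)) (x, y)"
  shows "(\<forall>f\<in>H. \<forall>x y. T f (x, y) = (\<integral>(u, v). KT x y u v * f (u, v) \<partial>(\<nu> \<Otimes>\<^sub>M lam)))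
     \<and> (\<forall>x y u v. KT x y u v = KT (x - u) y 0 v)
     \<and> (\<forall>v. (\<lambda>(x, y). KT x y 0 v) \<in> H)
     \<and> (\<forall>y. (\<lambda>(u, v). cnj (KT 0 y u v)) \<in> H)"
proof (intro conjI allI ballI)
  have KT_cnj: "(\<lambda>(u, v). cnj (KT x y u v)) = (\<lambda>q. cnj (T (K q) (x, y)))" for x y
    by (auto simp: KT_def)
  show "T f (x, y) = (\<integral>(u, v). KT x y u v * f (u, v) \<partial>(\<nu> \<Otimes>\<^sub>M lam))" if "f \<in> H" for f x y
    using L2_rkhs_eval_op_representer(2)[OF rkhs Tbdd that, of "(x, y)"]
    by (simp add: L2_inner_def KT_def case_prod_unfold mult.commute)
  show "(\<lambda>(u, v). cnj (KT 0 y u v)) \<in> H" for y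
    unfolding KT_cnj by (rule L2_rkhs_eval_op_representer(1)[OF rkhs Tbdd])
  have KH: "K q \<in> H" for q using rkhs unfolding L2_rkhs_def by blast
  show "(\<lambda>(x, y). KT x y 0 v) \<in> H" for v
    using Tbdd KH unfolding bounded_op_on_def by (auto simp: KT_def)
  show "KT x y u v = KT (x - u) y 0 v" for x y u v
  proof -
    have "K (u, v) = transl u (K (0, v))" by (rule transl_kernel[OF Kinv])
    then have "KT x y u v = T (transl u (K (0, v))) (x, y)"
      unfolding KT_def by (rule arg_cong[where f = "\<lambda>k. T k (x, y)"])
    also have "\<dots> = T (K (0, v)) (x - u, y)"
      using Tcomm[OF KH] by (simp add: transl_def)
    finally show ?thesis by (simp add: KT_def)
  qed
qed

end
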